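(* Let $k\ge1$, $r=\sqrt[k]{p}$. In multi-level MS with character-based regular sampling with a sampling factor in $\Theta(kr)$ and character-based bounded assignment, the maximum number of characters per PE in each level is in $\mathcal{O}\bigl(\frac{N}{p}+k^2r\hat{\ell}\bigr)$.
   Context: $p$ PEs hold strings with $N$ characters in total, $\Theta(N/p)$ per PE initially; $\hat{\ell}$ is the length of the longest string; $\|X\|$ denotes the number of characters of a set of strings $X$. Multi-level MS (with $p=r^k$): each PE sorts its local strings; then on each level $t=1,\dots,k$ the PEs form $r^{t-1}$ groups of $p'=r^{k+1-t}$ consecutive PEs, each group independently sorting the concatenation $S'$ of its PEs' locally sorted arrays $S_i$: $r-1$ splitters $f_1<\dots<f_{r-1}$ are chosen, bucket $B^j=\bigcup_i\{s\in S_i:f_j<s\le f_{j+1}\}$ ($f_0=-\infty,f_r=\infty$) is assigned to the $j$-th subgroup of $p''=p'/r$ PEs such that each PE of the subgroup receives at most $\|B^j\|/p''+\hat{\ell}$ characters (strings are not split), and received sequences are merged. Character-based regular sampling with factor $v$: with $\omega'=\|S'\|/(p'(v+1))$, PE $i$ draws $\lceil\|S_i\|/\omega'\rceil-1$ equally spaced positions in its local character array, shifted to the beginning of the containing strings, which are taken as samples (first PEs draw one more if fewer than $p'(v+1)$ result); samples $V$ are sorted globally and $f_j=V[j|V|/r-1]$. *)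

theory Defs
  imports Complex_Main "HOL-Library.Multiset" "HOL-Library.List_Lexorder"
begin

text \<open>Strings are lists over a linearly ordered alphabet, compared lexicographically
  (order on lists from List_Lexorder). A PE's local data is a list of strings.\<close>

definition chars :: "'a list list \<Rightarrow> nat" where
  "chars X = sum_list (map length X)"

definition chars_mset :: "'a list multiset \<Rightarrow> nat" where
  "chars_mset M = sum_mset (image_mset length M)"

text \<open>The string of a local string array that contains character position q (0-based)
  of the concatenated character array; None if q is out of range.\<close>
fun str_at :: "'a list list \<Rightarrow> nat \<Rightarrow> 'a list option" where
  "str_at [] q = None"
| "str_at (s # ss) q = (if q < length s then Some s else str_at ss (q - length s))"

text \<open>Character-based regular sampling within one group of pg PEs whose local
  (sorted) arrays are A 0, ..., A (pg-1); sampling factor v.\<close>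

definition omega :: "nat \<Rightarrow> nat \<Rightarrow> (nat \<Rightarrow> 'a list list) \<Rightarrow> real" where
  "omega pg v A = real (\<Sum>i<pg. chars (A i)) / real (pg * (v + 1))"

definition base_cnt :: "nat \<Rightarrow> nat \<Rightarrow> (nat \<Rightarrow> 'a list list) \<Rightarrow> nat \<Rightarrow> nat" where
  "base_cnt pg v A i = nat (\<lceil>real (chars (A i)) / omega pg v A\<rceil> - 1)"

definition deficit :: "nat \<Rightarrow> nat \<Rightarrow> (nat \<Rightarrow> 'a list list) \<Rightarrow> nat" where
  "deficit pg v A = pg * (v + 1) - (\<Sum>i<pg. base_cnt pg v A i)"

definition n_samples :: "nat \<Rightarrow> nat \<Rightarrow> (nat \<Rightarrow> 'a list list) \<Rightarrow> nat \<Rightarrow> nat" where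
  "n_samples pg v A i = base_cnt pg v A i + (if i < deficit pg v A then 1 else 0)"

definition sample_pos :: "nat \<Rightarrow> nat \<Rightarrow> (nat \<Rightarrow> 'a list list) \<Rightarrow> nat \<Rightarrow> nat list" where
  "sample_pos pg v A i =
     map (\<lambda>j. j * chars (A i) div (n_samples pg v A i + 1)) [1..<n_samples pg v A i + 1]"

definition local_samples :: "nat \<Rightarrow> nat \<Rightarrow> (nat \<Rightarrow> 'a list list) \<Rightarrow> nat \<Rightarrow> 'a list list" where
  "local_samples pg v A i = List.map_filter (str_at (A i)) (sample_pos pg v A i)"

definition sorted_samples :: "nat \<Rightarrow> nat \<Rightarrow> (nat \<Rightarrow> ('a::linorder) list list) \<Rightarrow> 'a list list" where
  "sorted_samples pg v A = sort (concat (map (local_samples pg v A) [0..<pg]))"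

definition splitter :: "nat \<Rightarrow> nat \<Rightarrow> nat \<Rightarrow> (nat \<Rightarrow> ('a::linorder) list list) \<Rightarrow> nat \<Rightarrow> 'a list" where
  "splitter r pg v A j = (let V = sorted_samples pg v A in V ! (j * length V div r - 1))"

definition in_bucket :: "nat \<Rightarrow> nat \<Rightarrow> nat \<Rightarrow> (nat \<Rightarrow> ('a::linorder) list list) \<Rightarrow> nat \<Rightarrow> 'a list \<Rightarrow> bool" where
  "in_bucket r pg v A j s \<longleftrightarrow>
     (j = 0 \<or> splitter r pg v A j < s) \<and> (j = r - 1 \<or> s \<le> splitter r pg v A (Suc j))"

definition bucket :: "nat \<Rightarrow> nat \<Rightarrow> nat \<Rightarrow> (nat \<Rightarrow> ('a::linorder) list list) \<Rightarrow> nat \<Rightarrow> 'a list multiset" where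
  "bucket r pg v A j = (\<Sum>i<pg. mset (filter (in_bucket r pg v A j) (A i)))"

text \<open>Level t (1 <= t <= k) of multi-level MS with p = r^k PEs: state X before, Y after.
  Groups of pg = r^(k+1-t) consecutive PEs; bucket j goes to the j-th subgroup of
  psub = r^(k-t) PEs, each PE receiving a (merged, hence sorted) part of the bucket with at
  most |B^j|/psub + lmax characters (character-based bounded assignment).\<close>
definition ms_level_step ::
  "nat \<Rightarrow> nat \<Rightarrow> nat \<Rightarrow> nat \<Rightarrow> nat \<Rightarrow> (nat \<Rightarrow> ('a::linorder) list list) \<Rightarrow> (nat \<Rightarrow> 'a list list) \<Rightarrow> bool" where
  "ms_level_step r k v lmax t X Y \<longleftrightarrow>
     (let pg = r ^ (k + 1 - t); psub = r ^ (k - t) in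
      \<forall>g < r ^ (t - 1). \<forall>j < r.
        (let A = (\<lambda>i. X (g * pg + i)); B = bucket r pg v A j in
          (\<Sum>i<psub. mset (Y (g * pg + j * psub + i))) = B \<and>
          (\<forall>i<psub. sorted (Y (g * pg + j * psub + i)) \<and>
             real (chars (Y (g * pg + j * psub + i)))
               \<le> real (chars_mset B) / real psub + real lmax)))"

definition ms_N :: "nat \<Rightarrow> nat \<Rightarrow> (nat \<Rightarrow> 'a list list) \<Rightarrow> nat" where
  "ms_N r k In = (\<Sum>i<r ^ k. chars (In i))"

definition ms_lhat :: "nat \<Rightarrow> nat \<Rightarrow> (nat \<Rightarrow> 'a list list) \<Rightarrow> nat" where
  "ms_lhat r k In = Max (insert 0 (length ` (\<Union>i<r ^ k. set (In i))))"

text \<open>A run: X t i is the local sorted string array of PE i after level t (t = 0: after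
  local sorting of the input In).\<close>
definition multilevel_ms_run ::
  "nat \<Rightarrow> nat \<Rightarrow> nat \<Rightarrow> (nat \<Rightarrow> ('a::linorder) list list) \<Rightarrow> (nat \<Rightarrow> nat \<Rightarrow> 'a list list) \<Rightarrow> bool" where
  "multilevel_ms_run r k v In X \<longleftrightarrow>
     (\<forall>i < r ^ k. X 0 i = sort (In i)) \<and>
     (\<forall>t \<in> {1..k}. ms_level_step r k v (ms_lhat r k In) t (X (t - 1)) (X t))"

end

theory Submission
  imports Defs
begin

(* Within a group of p' PEs a sample stands for about w = |S'| / (p' (v + 1)) characters:
   between two consecutive sample positions of a PE lie at most w characters, and at most
   |S'| / w + p' samples are drawn.  A bucket consists of the strings strictly between two
   splitters, whose ranks in the sorted sample differ by at most |V| / r + 1, plus the copies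
   of its upper splitter, of which there is at most one because the strings are distinct.
   Hence |B^j| <= w (|V| / r + 1 + p') + lhat, and if every PE of the group holds at most M
   characters, every PE of the receiving subgroup gets at most M (1 + 3 r / (v + 1)) + 2 lhat.
   For v >= c1 k r the factor is at most 1 + 3 / (c1 k), so over the k levels the load stays
   below e^(3 / c1) (c_hi N / p + 2 k lhat).  This is even O(N / p + k lhat). *)

lemma chars_Nil [simp]: "chars [] = 0"
  by (simp add: chars_def)

lemma chars_Cons [simp]: "chars (x # xs) = length x + chars xs"
  by (simp add: chars_def)

lemma chars_append [simp]: "chars (xs @ ys) = chars xs + chars ys"
  by (simp add: chars_def)

lemma chars_mset_mset: "chars_mset (mset xs) = chars xs"
  by (induction xs) (auto simp: chars_mset_def chars_def)

lemma chars_sort [simp]: "chars (sort xs) = chars xs"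
  by (metis chars_mset_mset mset_sort)

lemma chars_mset_sum: "chars_mset (\<Sum>i\<in>I. M i) = (\<Sum>i\<in>I. chars_mset (M i))"
  by (induction I rule: infinite_finite_induct) (auto simp: chars_mset_def)

lemma chars_filter_le: "chars (filter P xs) \<le> chars xs"
  by (induction xs) auto

lemma chars_filter_le_disj:
  assumes "\<And>s. P s \<Longrightarrow> Q s \<or> R s"
  shows "chars (filter P xs) \<le> chars (filter Q xs) + chars (filter R xs)"
  using assms by (induction xs) auto

lemma chars_filter_eq: "chars (filter (\<lambda>s. s = x) xs) = count (mset xs) x * length x"
  by (induction xs) auto

lemma str_at_append_right: "chars xs \<le> q \<Longrightarrow> str_at (xs @ ys) q = str_at ys (q - chars xs)"
  by (induction xs arbitrary: q) (auto simp: diff_diff_add)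

lemma str_at_append_left: "q < chars ys \<Longrightarrow> \<exists>s \<in> set ys. str_at (ys @ zs) q = Some s"
  by (induction ys arbitrary: q) auto

lemma str_at_middle:
  assumes "chars xs \<le> q" "q < chars xs + chars ys"
  shows "\<exists>s \<in> set ys. str_at (xs @ ys @ zs) q = Some s"
  using assms str_at_append_right[of xs q "ys @ zs"] str_at_append_left[of "q - chars xs" ys zs]
  by auto

lemma length_map_filter_le: "length (List.map_filter f xs) \<le> length xs"
  by (induction xs) (auto simp: map_filter_simps split: option.splits)

lemma length_filter_le_map_filter:
  assumes "\<And>x. x \<in> set xs \<Longrightarrow> P x \<Longrightarrow> \<exists>y. f x = Some y \<and> Q y"
  shows "length (filter P xs) \<le> length (filter Q (List.map_filter f xs))"
  using assms by (induction xs) (fastforce simp: map_filter_simps split: option.splits)+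

lemma sorted_set_dropWhile:
  fixes xs :: "'b::linorder list"
  assumes "sorted xs" "\<And>x y. x \<le> y \<Longrightarrow> \<not> R x \<Longrightarrow> \<not> R y" "s \<in> set (dropWhile R xs)"
  shows "\<not> R s"
proof -
  have ne: "dropWhile R xs \<noteq> []"
    using assms(3) by (metis empty_iff empty_set)
  have "hd (dropWhile R xs) \<le> s"
    using sorted_dropWhile[OF assms(1), of R] ne assms(3)
    by (cases "dropWhile R xs") auto
  then show ?thesis
    using assms(2) hd_dropWhile[OF ne] by blast
qed

lemma sorted_split_interval:
  fixes xs :: "'b::linorder list"
  assumes "sorted xs"
    and "\<And>x y. x \<le> y \<Longrightarrow> P x \<Longrightarrow> P y"
    and "\<And>x y. x \<le> y \<Longrightarrow> Q y \<Longrightarrow> Q x"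
  obtains as bs cs where "xs = as @ bs @ cs" "\<forall>s\<in>set bs. P s \<and> Q s"
    "\<forall>s\<in>set as \<union> set cs. \<not> (P s \<and> Q s)"
proof
  let ?rest = "dropWhile (\<lambda>s. \<not> P s) xs"
  show "xs = takeWhile (\<lambda>s. \<not> P s) xs @ takeWhile Q ?rest @ dropWhile Q ?rest"
    by simp
  have P: "P s" if "s \<in> set ?rest" for s
    using sorted_set_dropWhile[OF assms(1) _ that] assms(2) by (metis (full_types))
  have not_Q: "\<not> Q s" if "s \<in> set (dropWhile Q ?rest)" for s
    using sorted_set_dropWhile[OF sorted_dropWhile[OF assms(1)] _ that] assms(3) by metis
  show "\<forall>s\<in>set (takeWhile Q ?rest). P s \<and> Q s"
    using P set_takeWhileD by metis
  show "\<forall>s\<in>set (takeWhile (\<lambda>s. \<not> P s) xs) \<union> set (dropWhile Q ?rest). \<not> (P s \<and> Q s)"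
    using not_Q set_takeWhileD by (metis Un_iff)
qed

lemma ceiling_div_le_iff:
  fixes x c j :: nat
  assumes "0 < c"
  shows "(x + c - 1) div c \<le> j \<longleftrightarrow> x \<le> j * c"
proof -
  have "(x + c - 1) div c \<le> j \<longleftrightarrow> x + c - 1 < Suc j * c"
    using assms by (simp add: div_less_iff_less_mult flip: less_Suc_eq_le)
  also have "\<dots> \<longleftrightarrow> x \<le> j * c"
    using assms by auto
  finally show ?thesis .
qed

lemma length_filter_sample_positions:
  fixes c n a b :: nat
  assumes "0 < c" "b \<le> c"
  shows "length (filter (\<lambda>q. a \<le> q \<and> q < b) (map (\<lambda>j. j * c div (n + 1)) [1..<n + 1]))
    = (b * (n + 1) + c - 1) div c - max 1 ((a * (n + 1) + c - 1) div c)"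
    (is "_ = ?hi - ?lo")
proof -
  have lo: "1 \<le> j \<and> a * (n + 1) \<le> j * c \<longleftrightarrow> ?lo \<le> j" for j
    using ceiling_div_le_iff[OF assms(1)] by auto
  have hi: "j * c < b * (n + 1) \<longleftrightarrow> j < ?hi" for j
    using ceiling_div_le_iff[OF assms(1)] by (meson not_le)
  have "b * (n + 1) \<le> (n + 1) * c"
    using mult_le_mono1[OF assms(2), of "n + 1"] by (simp add: mult.commute)
  then have hi_le: "?hi \<le> n + 1"
    using ceiling_div_le_iff[OF assms(1)] by blast
  have "length (filter (\<lambda>q. a \<le> q \<and> q < b) (map (\<lambda>j. j * c div (n + 1)) [1..<n + 1]))
      = length (filter (\<lambda>j. a * (n + 1) \<le> j * c \<and> j * c < b * (n + 1)) [1..<n + 1])"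
    by (simp add: filter_map comp_def less_eq_div_iff_mult_less_eq div_less_iff_less_mult)
  also have "\<dots> = card ({j. a * (n + 1) \<le> j * c \<and> j * c < b * (n + 1)} \<inter> {1..<n + 1})"
    by (simp only: distinct_length_filter[OF distinct_upt] set_upt)
  also have "{j. a * (n + 1) \<le> j * c \<and> j * c < b * (n + 1)} \<inter> {1..<n + 1} = {?lo..<?hi}"
  proof (rule set_eqI)
    fix j
    show "j \<in> {j. a * (n + 1) \<le> j * c \<and> j * c < b * (n + 1)} \<inter> {1..<n + 1} \<longleftrightarrow> j \<in> {?lo..<?hi}"
      using lo[of j] hi[of j] hi_le by auto
  qed
  finally show ?thesis
    by simp
qed

lemma count_sample_positions:
  fixes c n a b :: nat
  assumes "0 < c" "a \<le> b" "b \<le> c"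
  shows "(b - a) * (n + 1)
    \<le> (length (filter (\<lambda>q. a \<le> q \<and> q < b) (map (\<lambda>j. j * c div (n + 1)) [1..<n + 1])) + 1) * c"
proof -
  define lo where "lo = max 1 ((a * (n + 1) + c - 1) div c)"
  define hi where "hi = (b * (n + 1) + c - 1) div c"
  have "(lo - 1) * c \<le> a * (n + 1)"
    using ceiling_div_le_iff[OF assms(1), of "a * (n + 1)" "lo - 1"] unfolding lo_def
    by (cases "(a * (n + 1) + c - 1) div c") auto
  moreover have "b * (n + 1) \<le> hi * c"
    using ceiling_div_le_iff[OF assms(1)] unfolding hi_def by blast
  ultimately have "(b - a) * (n + 1) \<le> (hi - (lo - 1)) * c"
    unfolding diff_mult_distrib by linarith
  also have "\<dots> \<le> (hi - lo + 1) * c"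
    by (intro mult_le_mono1) linarith
  finally show ?thesis
    unfolding length_filter_sample_positions[OF assms(1,3)] lo_def hi_def .
qed

lemma chars_filter_interval_le:
  fixes xs :: "('a::linorder) list list"
  assumes "sorted xs"
    and "\<And>x y. x \<le> y \<Longrightarrow> P x \<Longrightarrow> P y"
    and "\<And>x y. x \<le> y \<Longrightarrow> Q y \<Longrightarrow> Q x"
  shows "chars (filter (\<lambda>s. P s \<and> Q s) xs) * (n + 1)
    \<le> (length (filter (\<lambda>s. P s \<and> Q s)
          (List.map_filter (str_at xs) (map (\<lambda>j. j * chars xs div (n + 1)) [1..<n + 1]))) + 1)
       * chars xs"
proof (cases "chars xs = 0")
  case True
  then show ?thesis using chars_filter_le[of _ xs] by simp
next
  case False
  obtain as bs cs where xs: "xs = as @ bs @ cs" and bs: "\<forall>s\<in>set bs. P s \<and> Q s"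
    and as_cs: "\<forall>s\<in>set as \<union> set cs. \<not> (P s \<and> Q s)"
    using sorted_split_interval[of xs P Q] assms by blast
  \<comment> \<open>so the selected strings occupy an interval of character positions\<close>
  define pos where "pos = map (\<lambda>j. j * chars xs div (n + 1)) [1..<n + 1]"
  define a where "a = chars as"
  define b where "b = chars as + chars bs"
  have count: "length (filter (\<lambda>q. a \<le> q \<and> q < b) pos)
      \<le> length (filter (\<lambda>s. P s \<and> Q s) (List.map_filter (str_at xs) pos))"
  proof (rule length_filter_le_map_filter)
    fix q assume "q \<in> set pos" "a \<le> q \<and> q < b"
    then obtain s where "s \<in> set bs" "str_at xs q = Some s"
      using str_at_middle[of as q bs cs] unfolding xs a_def b_def by auto
    then show "\<exists>s. str_at xs q = Some s \<and> P s \<and> Q s"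
      using bs by auto
  qed
  have "filter (\<lambda>s. P s \<and> Q s) xs = bs"
    using bs as_cs unfolding xs by auto
  then have "chars (filter (\<lambda>s. P s \<and> Q s) xs) * (n + 1) = (b - a) * (n + 1)"
    unfolding a_def b_def by simp
  also have "\<dots> \<le> (length (filter (\<lambda>q. a \<le> q \<and> q < b) pos) + 1) * chars xs"
    unfolding pos_def using False by (intro count_sample_positions) (auto simp: a_def b_def xs)
  also have "\<dots> \<le> (length (filter (\<lambda>s. P s \<and> Q s) (List.map_filter (str_at xs) pos)) + 1) * chars xs"
    using count by simp
  finally show ?thesis
    by (simp add: pos_def)
qed

text \<open>The element of rank \<open>lo\<close> is \<open>xs ! (lo - 1)\<close>; ranks \<open>0\<close> and \<open>length xs\<close> act as
  \<open>-\<infinity>\<close> and \<open>+\<infinity>\<close>.\<close>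
definition between_ranks :: "'b::linorder list \<Rightarrow> nat \<Rightarrow> nat \<Rightarrow> 'b \<Rightarrow> bool" where
  "between_ranks xs lo hi s \<longleftrightarrow> (lo = 0 \<or> xs ! (lo - 1) < s) \<and> (hi = length xs \<or> s < xs ! (hi - 1))"

lemma length_filter_between_ranks_le:
  fixes xs :: "('b::linorder) list"
  assumes "sorted xs" "lo \<le> hi" "hi \<le> length xs"
  shows "length (filter (between_ranks xs lo hi) xs) \<le> hi - lo"
proof -
  have "{i. i < length xs \<and> between_ranks xs lo hi (xs ! i)} \<subseteq> {lo..<hi}"
  proof
    fix i assume "i \<in> {i. i < length xs \<and> between_ranks xs lo hi (xs ! i)}"
    then have i: "i < length xs" and between: "between_ranks xs lo hi (xs ! i)"
      by auto
    have "lo \<le> i"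
    proof (rule ccontr)
      assume "\<not> lo \<le> i"
      then have "lo \<noteq> 0" "i \<le> lo - 1" "lo - 1 < length xs"
        using assms(2,3) by linarith+
      then have "xs ! i \<le> xs ! (lo - 1)"
        using sorted_nth_mono[OF assms(1)] by blast
      moreover have "xs ! (lo - 1) < xs ! i"
        using between \<open>lo \<noteq> 0\<close> unfolding between_ranks_def by simp
      ultimately show False
        by (meson leD)
    qed
    moreover have "i < hi"
    proof (rule ccontr)
      assume "\<not> i < hi"
      then have "hi \<noteq> length xs" "hi - 1 \<le> i"
        using i by linarith+
      then have "xs ! (hi - 1) \<le> xs ! i"
        using sorted_nth_mono[OF assms(1)] i by blast
      moreover have "xs ! i < xs ! (hi - 1)"
        using between \<open>hi \<noteq> length xs\<close> unfolding between_ranks_def by simp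
      ultimately show False
        by (meson leD)
    qed
    ultimately show "i \<in> {lo..<hi}"
      by simp
  qed
  then have "card {i. i < length xs \<and> between_ranks xs lo hi (xs ! i)} \<le> card {lo..<hi}"
    by (intro card_mono) auto
  then show ?thesis
    by (simp add: length_filter_conv_card)
qed

lemma Suc_mult_div_diff_le:
  fixes j m r :: nat
  assumes "0 < r"
  shows "Suc j * m div r - j * m div r \<le> m div r + 1"
proof -
  have "j * m mod r + m mod r < 2 * r"
    using assms by (simp add: add_less_mono mult_2)
  then have "(j * m mod r + m mod r) div r < 2"
    by (rule less_mult_imp_div_less)
  moreover have "Suc j * m div r = j * m div r + m div r + (j * m mod r + m mod r) div r"
    using div_add1_eq[of "j * m" m r] by (simp add: add.commute)
  ultimately show ?thesis
    by linarith
qed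

lemma length_filter_between_quantiles_le:
  fixes xs :: "('b::linorder) list"
  assumes "sorted xs" "j < r"
  shows "length (filter (between_ranks xs (j * length xs div r) (Suc j * length xs div r)) xs)
    \<le> length xs div r + 1"
proof -
  have "Suc j * length xs \<le> r * length xs"
    using assms(2) by (intro mult_le_mono1) simp
  then have "Suc j * length xs div r \<le> length xs"
    using div_le_mono[of _ _ r] assms(2) by fastforce
  then have "length (filter (between_ranks xs (j * length xs div r) (Suc j * length xs div r)) xs)
      \<le> Suc j * length xs div r - j * length xs div r"
    using assms(1) by (intro length_filter_between_ranks_le div_le_mono) simp_all
  also have "\<dots> \<le> length xs div r + 1"
    using assms(2) by (intro Suc_mult_div_diff_le) simp
  finally show ?thesis .
qed

lemma omega_pos_iff:
  assumes "0 < pg"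
  shows "0 < omega pg v A \<longleftrightarrow> 0 < (\<Sum>i<pg. chars (A i))"
proof -
  have "0 < real (pg * (v + 1))"
    using assms by (simp only: of_nat_0_less_iff) simp
  then show ?thesis
    unfolding omega_def by (simp only: zero_less_divide_iff of_nat_0_less_iff of_nat_less_0_iff) simp
qed

lemma chars_le_omega_n_samples:
  assumes "0 < omega pg v A"
  shows "real (chars (A i)) \<le> omega pg v A * (real (n_samples pg v A i) + 1)"
proof -
  have "real (chars (A i)) / omega pg v A \<le> real (base_cnt pg v A i) + 1"
    unfolding base_cnt_def by linarith
  also have "\<dots> \<le> real (n_samples pg v A i) + 1"
    unfolding n_samples_def by simp
  finally show ?thesis
    using assms by (simp add: divide_le_eq mult.commute)
qed

lemma omega_n_samples_le:
  assumes "0 < omega pg v A"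
  shows "omega pg v A * real (n_samples pg v A i) \<le> real (chars (A i)) + omega pg v A"
proof -
  define x where "x = real (chars (A i)) / omega pg v A"
  have "0 \<le> x"
    using assms by (simp add: x_def)
  then have "real (base_cnt pg v A i) \<le> real (chars (A i)) / omega pg v A"
    unfolding base_cnt_def x_def[symmetric] by (cases "0 \<le> \<lceil>x\<rceil> - 1") (simp_all; linarith)+
  then have "real (n_samples pg v A i) \<le> real (chars (A i)) / omega pg v A + 1"
    unfolding n_samples_def by simp
  then have "omega pg v A * real (n_samples pg v A i)
      \<le> omega pg v A * (real (chars (A i)) / omega pg v A + 1)"
    using assms by (intro mult_left_mono) simp_all
  also have "\<dots> = real (chars (A i)) + omega pg v A"
    using assms by (simp add: field_simps)
  finally show ?thesis .
qed

lemma length_local_samples_le: "length (local_samples pg v A i) \<le> n_samples pg v A i"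
  using length_map_filter_le unfolding local_samples_def sample_pos_def
  by (metis diff_add_inverse2 length_map length_upt)

lemma length_filter_sorted_samples:
  "length (filter P (sorted_samples pg v A)) = (\<Sum>i<pg. length (filter P (local_samples pg v A i)))"
proof -
  have "length (filter P (sorted_samples pg v A))
      = length (filter P (concat (map (local_samples pg v A) [0..<pg])))"
    unfolding sorted_samples_def by (rule mset_eq_length) simp
  also have "\<dots> = (\<Sum>i<pg. length (filter P (local_samples pg v A i)))"
    by (simp add: filter_concat length_concat comp_def sum_list_distinct_conv_sum_set atLeast0LessThan)
  finally show ?thesis .
qed

lemma omega_length_sorted_samples_le:
  assumes "0 < omega pg v A"
  shows "omega pg v A * real (length (sorted_samples pg v A))
      \<le> real (\<Sum>i<pg. chars (A i)) + real pg * omega pg v A"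
proof -
  have "length (sorted_samples pg v A) \<le> (\<Sum>i<pg. n_samples pg v A i)"
    using length_filter_sorted_samples[of "\<lambda>_. True" pg v A]
    by (simp add: sum_mono length_local_samples_le)
  then have "real (length (sorted_samples pg v A)) \<le> (\<Sum>i<pg. real (n_samples pg v A i))"
    by (simp only: of_nat_sum[symmetric] of_nat_le_iff)
  then have "omega pg v A * real (length (sorted_samples pg v A))
      \<le> (\<Sum>i<pg. omega pg v A * real (n_samples pg v A i))"
    using assms by (simp add: sum_distrib_left[symmetric] mult_left_mono del: of_nat_sum)
  also have "\<dots> \<le> (\<Sum>i<pg. real (chars (A i)) + omega pg v A)"
    by (intro sum_mono omega_n_samples_le[OF assms])
  finally show ?thesis
    by (simp add: sum.distrib)
qed

lemma chars_mset_bucket: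
  "chars_mset (bucket r pg v A j) = (\<Sum>i<pg. chars (filter (in_bucket r pg v A j) (A i)))"
  unfolding bucket_def chars_mset_sum by (simp add: chars_mset_mset del: mset_filter)

lemma chars_mset_bucket_le: "chars_mset (bucket r pg v A j) \<le> (\<Sum>i<pg. chars (A i))"
  unfolding chars_mset_bucket by (intro sum_mono chars_filter_le)

lemma bucket_subset: "bucket r pg v A j \<subseteq># (\<Sum>i<pg. mset (A i))"
  unfolding bucket_def by (rule mset_subset_eqI) (auto simp: count_sum intro!: sum_mono)

lemma sum_chars_filter_eq_le:
  assumes "count (\<Sum>i<pg. mset (A i)) x \<le> 1" "x \<in># (\<Sum>i<pg. mset (A i)) \<Longrightarrow> length x \<le> L"
  shows "(\<Sum>i<pg. chars (filter (\<lambda>s. s = x) (A i))) \<le> L"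
proof -
  have "(\<Sum>i<pg. chars (filter (\<lambda>s. s = x) (A i))) = count (\<Sum>i<pg. mset (A i)) x * length x"
    by (simp add: chars_filter_eq count_sum sum_distrib_right)
  also have "\<dots> \<le> L"
  proof (cases "x \<in># (\<Sum>i<pg. mset (A i))")
    case True
    then have "count (\<Sum>i<pg. mset (A i)) x * length x \<le> 1 * L"
      using assms by (intro mult_le_mono) auto
    then show ?thesis
      by simp
  next
    case False
    then show ?thesis
      by (simp add: not_in_iff)
  qed
  finally show ?thesis .
qed

lemma chars_filter_interval_le_omega:
  fixes A :: "nat \<Rightarrow> ('a::linorder) list list"
  assumes "sorted (A i)" "0 < omega pg v A"
    and "\<And>x y. x \<le> y \<Longrightarrow> P x \<Longrightarrow> P y"
    and "\<And>x y. x \<le> y \<Longrightarrow> Q y \<Longrightarrow> Q x"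
  shows "real (chars (filter (\<lambda>s. P s \<and> Q s) (A i)))
    \<le> omega pg v A * (real (length (filter (\<lambda>s. P s \<and> Q s) (local_samples pg v A i))) + 1)"
proof -
  define n where "n = n_samples pg v A i"
  define cnt where "cnt = length (filter (\<lambda>s. P s \<and> Q s) (local_samples pg v A i))"
  have "chars (filter (\<lambda>s. P s \<and> Q s) (A i)) * (n + 1) \<le> (cnt + 1) * chars (A i)"
    unfolding cnt_def n_def local_samples_def sample_pos_def
    using assms(1,3,4) by (rule chars_filter_interval_le)
  then have "real (chars (filter (\<lambda>s. P s \<and> Q s) (A i)) * (n + 1)) \<le> real ((cnt + 1) * chars (A i))"
    by (simp only: of_nat_le_iff)
  then have "real (chars (filter (\<lambda>s. P s \<and> Q s) (A i))) * (real n + 1)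
      \<le> (real cnt + 1) * real (chars (A i))"
    by (simp add: algebra_simps)
  also have "\<dots> \<le> (real cnt + 1) * (omega pg v A * (real n + 1))"
    using chars_le_omega_n_samples[OF assms(2)] unfolding n_def by (intro mult_left_mono) auto
  also have "\<dots> = omega pg v A * (real cnt + 1) * (real n + 1)"
    by (simp add: algebra_simps)
  finally show ?thesis
    unfolding cnt_def by (rule mult_right_le_imp_le) simp
qed

lemma in_bucket_between_ranks:
  assumes "j < r" "in_bucket r pg v A j s"
  defines "V \<equiv> sorted_samples pg v A"
  shows "between_ranks V (j * length V div r) (Suc j * length V div r) s
    \<or> s = splitter r pg v A (Suc j)"
proof -
  have "Suc j * length V div r = length V" if "j = r - 1"
    using that assms(1) by (simp add: Suc_diff_1)
  then show ?thesis
    using assms(2) unfolding in_bucket_def between_ranks_def splitter_def V_def Let_def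
    by (auto simp: le_less)
qed

lemma sum_chars_between_quantiles_le:
  fixes A :: "nat \<Rightarrow> ('a::linorder) list list"
  assumes "j < r" "0 < omega pg v A" "\<forall>i<pg. sorted (A i)"
  defines "V \<equiv> sorted_samples pg v A"
  shows "real (\<Sum>i<pg. chars (filter (between_ranks V (j * length V div r) (Suc j * length V div r)) (A i)))
    \<le> omega pg v A * (real (length V) / real r + 1 + real pg)"
proof -
  let ?between = "between_ranks V (j * length V div r) (Suc j * length V div r)"
  have "real (\<Sum>i<pg. chars (filter ?between (A i)))
      \<le> (\<Sum>i<pg. omega pg v A * (real (length (filter ?between (local_samples pg v A i))) + 1))"
    unfolding of_nat_sum between_ranks_def
    by (intro sum_mono chars_filter_interval_le_omega) (use assms(2,3) less_le_trans le_less_trans in auto)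
  also have "\<dots> = omega pg v A * (real (length (filter ?between V)) + real pg)"
    unfolding V_def length_filter_sorted_samples by (simp add: distrib_left sum_distrib_left sum.distrib)
  also have "length (filter ?between V) \<le> length V div r + 1"
    using assms(1) unfolding V_def sorted_samples_def
    by (intro length_filter_between_quantiles_le) simp_all
  also have "real (length V div r + 1) \<le> real (length V) / real r + 1"
    using of_nat_div_le_of_nat[of "length V" r] by simp
  finally show ?thesis
    using assms(2) by (simp add: mult_left_mono)
qed

lemma chars_mset_bucket_le_omega:
  fixes A :: "nat \<Rightarrow> ('a::linorder) list list"
  assumes "j < r" "0 < omega pg v A"
    and "\<forall>i<pg. sorted (A i)"
    and "\<forall>s. count (\<Sum>i<pg. mset (A i)) s \<le> 1"
    and "\<forall>s \<in># (\<Sum>i<pg. mset (A i)). length s \<le> L"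
  shows "real (chars_mset (bucket r pg v A j))
    \<le> (real (\<Sum>i<pg. chars (A i)) + real pg * omega pg v A) / real r
      + omega pg v A + real pg * omega pg v A + real L"
proof -
  define V where "V = sorted_samples pg v A"
  let ?between = "between_ranks V (j * length V div r) (Suc j * length V div r)"
  let ?f = "splitter r pg v A (Suc j)"
  have "chars_mset (bucket r pg v A j)
      \<le> (\<Sum>i<pg. chars (filter ?between (A i))) + (\<Sum>i<pg. chars (filter (\<lambda>s. s = ?f) (A i)))"
    unfolding chars_mset_bucket sum.distrib[symmetric] V_def
    using in_bucket_between_ranks[OF assms(1)] by (intro sum_mono chars_filter_le_disj)
  also have "(\<Sum>i<pg. chars (filter (\<lambda>s. s = ?f) (A i))) \<le> L"
    by (rule sum_chars_filter_eq_le) (use assms(4,5) in auto)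
  finally have "real (chars_mset (bucket r pg v A j)) \<le> real (\<Sum>i<pg. chars (filter ?between (A i))) + real L"
    by (simp only: of_nat_add [symmetric] of_nat_le_iff)
  moreover have "real (\<Sum>i<pg. chars (filter ?between (A i)))
      \<le> omega pg v A * (real (length V) / real r) + omega pg v A + real pg * omega pg v A"
    using sum_chars_between_quantiles_le[OF assms(1-3)] unfolding V_def by (simp add: algebra_simps)
  moreover have "omega pg v A * (real (length V) / real r)
      \<le> (real (\<Sum>i<pg. chars (A i)) + real pg * omega pg v A) / real r"
    using divide_right_mono[OF omega_length_sorted_samples_le[OF assms(2)], of "real r"]
    unfolding V_def by simp
  ultimately show ?thesis
    by linarith
qed

lemma omega_mult_le:
  assumes "0 < pg" "\<forall>i<pg. real (chars (A i)) \<le> M"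
  shows "omega pg v A * (real v + 1) \<le> M"
proof -
  have "omega pg v A * (real v + 1)
      = real (\<Sum>i<pg. chars (A i)) / (real pg * (real v + 1)) * (real v + 1)"
    unfolding omega_def by (simp only: of_nat_mult of_nat_add of_nat_1)
  also have "\<dots> = real (\<Sum>i<pg. chars (A i)) / real pg"
  proof -
    have "real v + 1 \<noteq> 0"
      using of_nat_0_le_iff[of v] by linarith
    then show ?thesis
      by (simp only: times_divide_eq_left nonzero_mult_divide_mult_cancel_right not_False_eq_True)
  qed
  also have "\<dots> \<le> M"
    using sum_mono[of "{..<pg}" "\<lambda>i. real (chars (A i))" "\<lambda>_. M"] assms
    by (simp add: divide_le_eq mult.commute)
  finally show ?thesis .
qed

lemma bucket_share_le:
  fixes A :: "nat \<Rightarrow> ('a::linorder) list list"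
  assumes "j < r" "0 < psub"
    and "\<forall>i<r * psub. sorted (A i)"
    and "\<forall>s. count (\<Sum>i<r * psub. mset (A i)) s \<le> 1"
    and "\<forall>s \<in># (\<Sum>i<r * psub. mset (A i)). length s \<le> L"
    and "\<forall>i<r * psub. real (chars (A i)) \<le> M"
  shows "real (chars_mset (bucket r (r * psub) v A j)) / real psub
    \<le> M * (1 + 3 * real r / real (v + 1)) + real L"
proof (cases "0 < omega (r * psub) v A")
  case False
  then have "chars_mset (bucket r (r * psub) v A j) = 0"
    using omega_pos_iff[of "r * psub" v A] chars_mset_bucket_le[of r "r * psub" v A j] assms(1,2)
    by simp
  moreover have "real (chars (A 0)) \<le> M"
    using assms(1,2,6) by simp
  ultimately show ?thesis
    by (simp add: order_trans[OF of_nat_0_le_iff])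
next
  case True
  define w where "w = omega (r * psub) v A"
  define S where "S = real (\<Sum>i<r * psub. chars (A i))"
  have "0 < w"
    using True unfolding w_def .
  have "1 \<le> real r"
    using assms(1) by simp
  have "real (chars_mset (bucket r (r * psub) v A j)) / real psub
      \<le> ((S + real (r * psub) * w) / real r + w + real (r * psub) * w + real L) / real psub"
    unfolding S_def w_def using assms \<open>0 < w\<close> unfolding w_def
    by (intro divide_right_mono chars_mset_bucket_le_omega) auto
  also have "\<dots> = S / real (r * psub) + w + w / real psub + real r * w + real L / real psub"
    using assms(2) \<open>1 \<le> real r\<close> by (simp add: field_simps)
  also have "\<dots> \<le> M + 3 * real r * w + real L"
  proof -
    have "S / real (r * psub) \<le> M"
      using sum_mono[of "{..<r * psub}" "\<lambda>i. real (chars (A i))" "\<lambda>_. M"] assms(1,2,6)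
      unfolding S_def by (simp add: divide_le_eq mult.commute)
    moreover have "w / real psub \<le> w" "real L / real psub \<le> real L"
      using assms(2) \<open>0 < w\<close> by (simp_all add: divide_le_eq mult_le_cancel_left1)
    moreover have "w \<le> real r * w"
      using \<open>1 \<le> real r\<close> \<open>0 < w\<close> by simp
    ultimately show ?thesis
      by linarith
  qed
  also have "w \<le> M / (real v + 1)"
    using omega_mult_le[of "r * psub" A M v] assms(1,2,6) unfolding w_def by (simp add: le_divide_eq)
  finally show ?thesis
    using \<open>1 \<le> real r\<close> by (simp add: algebra_simps mult_left_mono)
qed

lemma mixed_radix_decomposition:
  fixes i a b c :: nat
  assumes "i < a * (b * c)"
  obtains g j i' where "g < a" "j < b" "i' < c" "i = g * (b * c) + j * c + i'"
proof
  have "0 < b" "0 < c"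
    using assms by (auto intro: gr0I)
  show "i div (b * c) < a"
    using assms \<open>0 < b\<close> \<open>0 < c\<close> by (simp add: div_less_iff_less_mult)
  show "i mod (b * c) div c < b"
    using \<open>0 < b\<close> \<open>0 < c\<close> by (simp add: div_less_iff_less_mult mult.commute)
  show "i mod c < c"
    using \<open>0 < c\<close> by simp
  have "i mod (b * c) mod c = i mod c"
    by (simp add: mod_mod_cancel)
  then show "i = i div (b * c) * (b * c) + i mod (b * c) div c * c + i mod c"
    by (metis div_mult_mod_eq add.assoc)
qed

lemma block_index_less:
  fixes g i a b :: nat
  assumes "g < a" "i < b"
  shows "g * b + i < a * b"
proof -
  have "g * b + i < Suc g * b"
    using assms(2) by simp
  also have "\<dots> \<le> a * b"
    using assms(1) by (intro mult_le_mono1) simp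
  finally show ?thesis .
qed

lemma power_level_split:
  fixes r :: nat
  assumes "Suc t \<le> k"
  shows "r ^ (k - t) = r * r ^ (k - Suc t)" "r ^ k = r ^ t * r ^ (k - t)"
proof -
  have "k - t = Suc (k - Suc t)"
    using assms by simp
  then show "r ^ (k - t) = r * r ^ (k - Suc t)"
    by simp
  show "r ^ k = r ^ t * r ^ (k - t)"
    using assms by (simp flip: power_add)
qed

lemma ms_level_stepD:
  assumes "ms_level_step r k v L (Suc t) X Y" "g < r ^ t" "j < r" "i < r ^ (k - Suc t)"
  shows "sorted (Y (g * r ^ (k - t) + j * r ^ (k - Suc t) + i))"
    and "real (chars (Y (g * r ^ (k - t) + j * r ^ (k - Suc t) + i)))
      \<le> real (chars_mset (bucket r (r ^ (k - t)) v (\<lambda>i. X (g * r ^ (k - t) + i)) j))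
          / real (r ^ (k - Suc t)) + real L"
  using assms unfolding ms_level_step_def Let_def by auto

lemma ms_level_step_mset:
  assumes "ms_level_step r k v L (Suc t) X Y" "g < r ^ t" "j < r"
  shows "(\<Sum>i<r ^ (k - Suc t). mset (Y (g * r ^ (k - t) + j * r ^ (k - Suc t) + i)))
    = bucket r (r ^ (k - t)) v (\<lambda>i. X (g * r ^ (k - t) + i)) j"
  using assms unfolding ms_level_step_def Let_def by auto

lemma count_input_le_1:
  assumes "distinct (concat (map In [0..<n]))"
  shows "count (\<Sum>i<n. mset (In i)) s \<le> 1"
proof -
  have "mset (concat (map In [0..<n])) = (\<Sum>i<n. mset (In i))"
    by (simp add: mset_concat comp_def sum_list_distinct_conv_sum_set atLeast0LessThan)
  then show ?thesis
    using assms by (metis distinct_count_atmost_1 order_refl zero_le_one)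
qed

lemma length_le_ms_lhat:
  assumes "s \<in># (\<Sum>i<r ^ k. mset (In i))"
  shows "length s \<le> ms_lhat r k In"
proof -
  have "length s \<in> insert 0 (length ` (\<Union>i<r ^ k. set (In i)))"
    using assms by (auto simp: set_mset_sum)
  then show ?thesis
    unfolding ms_lhat_def by (intro Max_ge) auto
qed

lemma multilevel_ms_run_step:
  assumes "multilevel_ms_run r k v In X" "Suc t \<le> k"
  shows "ms_level_step r k v (ms_lhat r k In) (Suc t) (X t) (X (Suc t))"
proof -
  have "Suc t \<in> {1..k}"
    using assms(2) by simp
  then show ?thesis
    using assms(1) unfolding multilevel_ms_run_def by (metis diff_Suc_1)
qed

lemma multilevel_ms_run_sorted:
  assumes "multilevel_ms_run r k v In X" "t \<le> k" "i < r ^ k"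
  shows "sorted (X t i)"
proof (cases t)
  case 0
  then show ?thesis
    using assms unfolding multilevel_ms_run_def by simp
next
  case (Suc t')
  then have "ms_level_step r k v (ms_lhat r k In) (Suc t') (X t') (X (Suc t'))"
    using assms(1,2) by (intro multilevel_ms_run_step) simp_all
  moreover obtain g j i' where "g < r ^ t'" "j < r" "i' < r ^ (k - Suc t')"
    and "i = g * (r * r ^ (k - Suc t')) + j * r ^ (k - Suc t') + i'"
    using assms(3) power_level_split[of t' k r] Suc assms(2) by (metis mixed_radix_decomposition)
  ultimately show ?thesis
    using ms_level_stepD(1) power_level_split[of t' k r] Suc assms(2) by metis
qed

lemma multilevel_ms_run_group_subset:
  assumes "multilevel_ms_run r k v In X" "t \<le> k" "g < r ^ t"
  shows "(\<Sum>i<r ^ (k - t). mset (X t (g * r ^ (k - t) + i))) \<subseteq># (\<Sum>i<r ^ k. mset (In i))"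
  using assms(2,3)
proof (induction t arbitrary: g)
  case 0
  then show ?case
    using assms(1) unfolding multilevel_ms_run_def by simp
next
  case (Suc t g')
  have step: "ms_level_step r k v (ms_lhat r k In) (Suc t) (X t) (X (Suc t))"
    using assms(1) Suc.prems(1) by (rule multilevel_ms_run_step)
  have "0 < r"
    using Suc.prems(2) by (auto intro: gr0I)
  define g where "g = g' div r"
  define j where "j = g' mod r"
  have "g < r ^ t"
    using Suc.prems(2) \<open>0 < r\<close> unfolding g_def by (simp add: div_less_iff_less_mult mult.commute)
  have "j < r"
    using \<open>0 < r\<close> unfolding j_def by simp
  have "g' * r ^ (k - Suc t) = g * r ^ (k - t) + j * r ^ (k - Suc t)"
    using power_level_split(1)[OF Suc.prems(1)] unfolding g_def j_def
    by (metis add_mult_distrib div_mult_mod_eq mult.assoc mult.commute)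
  then have "(\<Sum>i<r ^ (k - Suc t). mset (X (Suc t) (g' * r ^ (k - Suc t) + i)))
      = bucket r (r ^ (k - t)) v (\<lambda>i. X t (g * r ^ (k - t) + i)) j"
    using ms_level_step_mset[OF step \<open>g < r ^ t\<close> \<open>j < r\<close>] by (simp add: add.assoc)
  also have "\<dots> \<subseteq># (\<Sum>i<r ^ (k - t). mset (X t (g * r ^ (k - t) + i)))"
    by (rule bucket_subset)
  also have "\<dots> \<subseteq># (\<Sum>i<r ^ k. mset (In i))"
    using Suc.IH Suc.prems(1) \<open>g < r ^ t\<close> by simp
  finally show ?case .
qed

lemma multilevel_ms_run_load_step:
  assumes "multilevel_ms_run r k v In X" "Suc t \<le> k" "distinct (concat (map In [0..<r ^ k]))"
    and "\<forall>i<r ^ k. real (chars (X t i)) \<le> M" "i < r ^ k"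
  shows "real (chars (X (Suc t) i))
    \<le> M * (1 + 3 * real r / real (v + 1)) + 2 * real (ms_lhat r k In)"
proof -
  note split = power_level_split[OF assms(2), of r]
  obtain g j i' where "g < r ^ t" "j < r" "i' < r ^ (k - Suc t)"
    and i: "i = g * r ^ (k - t) + j * r ^ (k - Suc t) + i'"
    using assms(5) split by (metis mixed_radix_decomposition)
  define A where "A i = X t (g * r ^ (k - t) + i)" for i
  have idx: "g * r ^ (k - t) + i < r ^ k" if "i < r ^ (k - t)" for i
    using block_index_less[OF \<open>g < r ^ t\<close> that] split(2) by (simp add: mult.commute)
  have sub: "(\<Sum>i<r ^ (k - t). mset (A i)) \<subseteq># (\<Sum>i<r ^ k. mset (In i))"
    unfolding A_def using assms(1,2) \<open>g < r ^ t\<close> by (intro multilevel_ms_run_group_subset) simp_all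
  have "real (chars_mset (bucket r (r * r ^ (k - Suc t)) v A j)) / real (r ^ (k - Suc t))
      \<le> M * (1 + 3 * real r / real (v + 1)) + real (ms_lhat r k In)"
  proof (intro bucket_share_le[OF \<open>j < r\<close>], unfold split(1)[symmetric])
    show "0 < r ^ (k - Suc t)"
      using \<open>j < r\<close> by simp
    show "\<forall>i<r ^ (k - t). sorted (A i)"
      unfolding A_def using assms(1,2) idx by (simp add: multilevel_ms_run_sorted)
    show "\<forall>s. count (\<Sum>i<r ^ (k - t). mset (A i)) s \<le> 1"
      using sub count_input_le_1[OF assms(3)] by (meson mset_subset_eq_count order_trans)
    show "\<forall>s\<in>#\<Sum>i<r ^ (k - t). mset (A i). length s \<le> ms_lhat r k In"
      using length_le_ms_lhat mset_subset_eqD[OF sub] by blast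
    show "\<forall>i<r ^ (k - t). real (chars (A i)) \<le> M"
      unfolding A_def using assms(4) idx by simp
  qed
  moreover have "real (chars (X (Suc t) i))
      \<le> real (chars_mset (bucket r (r ^ (k - t)) v A j)) / real (r ^ (k - Suc t)) + real (ms_lhat r k In)"
    unfolding i A_def
    using multilevel_ms_run_step[OF assms(1,2)] \<open>g < r ^ t\<close> \<open>j < r\<close> \<open>i' < r ^ (k - Suc t)\<close>
    by (rule ms_level_stepD(2))
  ultimately show ?thesis
    unfolding split(1) by linarith
qed

lemma multilevel_ms_run_chars_le_power:
  fixes q M0 :: real
  assumes "multilevel_ms_run r k v In X" "distinct (concat (map In [0..<r ^ k]))"
    and "\<forall>i<r ^ k. real (chars (In i)) \<le> M0" "0 \<le> M0"
    and "1 \<le> q" "1 + 3 * real r / real (v + 1) \<le> q"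
    and "t \<le> k" "i < r ^ k"
  shows "real (chars (X t i)) \<le> q ^ t * (M0 + 2 * real t * real (ms_lhat r k In))"
  using assms(7,8)
proof (induction t arbitrary: i)
  case 0
  then show ?case
    using assms(1,3) unfolding multilevel_ms_run_def by simp
next
  case (Suc t)
  define L where "L = real (ms_lhat r k In)"
  define M where "M = q ^ t * (M0 + 2 * real t * L)"
  have "0 \<le> M" "0 \<le> L"
    unfolding M_def L_def using assms(4,5) by simp_all
  have "real (chars (X (Suc t) i)) \<le> M * (1 + 3 * real r / real (v + 1)) + 2 * L"
    using multilevel_ms_run_load_step[OF assms(1) Suc.prems(1) assms(2) _ Suc.prems(2), of M] Suc
    unfolding M_def L_def by simp
  also have "\<dots> \<le> M * q + q ^ Suc t * (2 * L)"
  proof (rule add_mono)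
    show "M * (1 + 3 * real r / real (v + 1)) \<le> M * q"
      using assms(6) \<open>0 \<le> M\<close> by (rule mult_left_mono)
    show "2 * L \<le> q ^ Suc t * (2 * L)"
      using mult_right_mono[OF one_le_power[OF assms(5), of "Suc t"], of "2 * L"] \<open>0 \<le> L\<close>
      by simp
  qed
  also have "\<dots> = q ^ Suc t * (M0 + 2 * real (Suc t) * L)"
    unfolding M_def by (simp add: algebra_simps)
  finally show ?case
    unfolding L_def .
qed

lemma multilevel_ms_run_chars_le:
  fixes c1 M0 :: real
  assumes "multilevel_ms_run r k v In X" "1 \<le> k" "0 < c1" "c1 * real (k * r) \<le> real v"
    and "distinct (concat (map In [0..<r ^ k]))" "\<forall>i<r ^ k. real (chars (In i)) \<le> M0"
    and "t \<le> k" "i < r ^ k"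
  shows "real (chars (X t i)) \<le> exp (3 / c1) * (M0 + 2 * real k * real (ms_lhat r k In))"
proof -
  define q where "q = 1 + (3 / c1) / real k"
  have "0 < r"
    using assms(2,8) by (cases r) (simp_all add: power_0_left)
  have "0 \<le> M0"
    using assms(6,8) by (meson of_nat_0_le_iff order_trans)
  have "1 \<le> q"
    unfolding q_def using assms(3) by simp
  have "3 * real r / real (v + 1) \<le> 3 * real r / (c1 * real k * real r)"
    using assms(2,3,4) \<open>0 < r\<close> by (intro divide_left_mono) simp_all
  also have "\<dots> = (3 / c1) / real k"
    using \<open>0 < r\<close> by simp
  finally have "1 + 3 * real r / real (v + 1) \<le> q"
    unfolding q_def by simp
  then have "real (chars (X t i)) \<le> q ^ t * (M0 + 2 * real t * real (ms_lhat r k In))"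
    using assms(1,5,6,7,8) \<open>0 \<le> M0\<close> \<open>1 \<le> q\<close> by (intro multilevel_ms_run_chars_le_power)
  also have "\<dots> \<le> q ^ k * (M0 + 2 * real k * real (ms_lhat r k In))"
    using \<open>1 \<le> q\<close> \<open>0 \<le> M0\<close> assms(7)
    by (intro mult_mono power_increasing) (simp_all add: mult_right_mono)
  also have "q ^ k \<le> exp (3 / c1)"
    unfolding q_def using assms(2,3)
    by (intro exp_ge_one_plus_x_over_n_power_n) (simp_all add: order_trans[of _ 0])
  finally show ?thesis
    using \<open>0 \<le> M0\<close> by (simp add: mult_right_mono)
qed

lemma affine_le_quadratic_bound:
  fixes c x L :: real and k r :: nat
  assumes "0 \<le> x" "0 \<le> L" "1 \<le> k" "1 \<le> r"
  shows "c * x + 2 * real k * L \<le> (\<bar>c\<bar> + 2) * (x + real k ^ 2 * real r * L)"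
proof -
  define K where "K = real k ^ 2 * real r * L"
  have "1 \<le> real k * real r"
    using assms(3,4) mult_mono[of 1 "real k" 1 "real r"] by simp
  then have "real k \<le> real k ^ 2 * real r"
    using mult_left_mono[of 1 "real k * real r" "real k"] by (simp add: power2_eq_square mult.assoc)
  then have "real k * L \<le> real k ^ 2 * real r * L"
    using assms(2) by (rule mult_right_mono)
  then have "2 * real k * L \<le> 2 * K"
    unfolding K_def by simp
  moreover have "c * x \<le> \<bar>c\<bar> * x"
    using assms(1) by (simp add: mult_right_mono)
  moreover have "0 \<le> \<bar>c\<bar> * K" "0 \<le> K"
    unfolding K_def using assms(2) by simp_all
  moreover have "(\<bar>c\<bar> + 2) * (x + K) = \<bar>c\<bar> * x + \<bar>c\<bar> * K + 2 * x + 2 * K"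
    by (simp add: algebra_simps)
  ultimately show ?thesis
    unfolding K_def[symmetric] using assms(1) by linarith
qed

theorem theorem5:
  fixes c_lo c_hi c1 c2 :: real
  assumes "0 < c_lo" and "0 < c1"
  shows "\<exists>C::real. \<forall>(k::nat) (r::nat) (v::nat) (In :: nat \<Rightarrow> ('a::linorder) list list) X.
     k \<ge> 1 \<and> r \<ge> 1 \<and>
     c1 * real (k * r) \<le> real v \<and> real v \<le> c2 * real (k * r) \<and>
     distinct (concat (map In [0..<r ^ k])) \<and>
     (\<forall>i < r ^ k. c_lo * real (ms_N r k In) / real (r ^ k) \<le> real (chars (In i)) \<and>
                  real (chars (In i)) \<le> c_hi * real (ms_N r k In) / real (r ^ k)) \<and>
     multilevel_ms_run r k v In X
     \<longrightarrow> (\<forall>t \<le> k. \<forall>i < r ^ k.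
            real (chars (X t i))
              \<le> C * (real (ms_N r k In) / real (r ^ k) + real k ^ 2 * real r * real (ms_lhat r k In)))"
proof (intro exI allI impI, elim conjE)
  fix k r v t i and In :: "nat \<Rightarrow> 'a list list" and X
  assume "1 \<le> k" "1 \<le> r" "c1 * real (k * r) \<le> real v"
    and distinct: "distinct (concat (map In [0..<r ^ k]))"
    and input: "\<forall>i<r ^ k. c_lo * real (ms_N r k In) / real (r ^ k) \<le> real (chars (In i))
      \<and> real (chars (In i)) \<le> c_hi * real (ms_N r k In) / real (r ^ k)"
    and "multilevel_ms_run r k v In X" "t \<le> k" "i < r ^ k"
  define x where "x = real (ms_N r k In) / real (r ^ k)"
  have "real (chars (X t i)) \<le> exp (3 / c1) * (c_hi * x + 2 * real k * real (ms_lhat r k In))"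
    unfolding x_def using input
    by (intro multilevel_ms_run_chars_le[OF \<open>multilevel_ms_run r k v In X\<close> \<open>1 \<le> k\<close> assms(2)
          \<open>c1 * real (k * r) \<le> real v\<close> distinct _ \<open>t \<le> k\<close> \<open>i < r ^ k\<close>]) auto
  also have "\<dots> \<le> exp (3 / c1) * ((\<bar>c_hi\<bar> + 2) * (x + real k ^ 2 * real r * real (ms_lhat r k In)))"
    unfolding x_def using \<open>1 \<le> k\<close> \<open>1 \<le> r\<close> by (intro mult_left_mono affine_le_quadratic_bound) simp_all
  finally show "real (chars (X t i)) \<le> exp (3 / c1) * (\<bar>c_hi\<bar> + 2) * (x + real k ^ 2 * real r * real (ms_lhat r k In))"
    by (simp add: mult.assoc)
qed

end
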